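(* Let $G$ be a graph without isolated vertices and $T$ a solution counting decision tree for $\varphi(G)$. Let $u$ be a node of $T$, $v$ a child of $u$, and $S\subseteq V(G)$. Then $\alpha^v(S)\leq\alpha^u(S)$.
   Context: $\varphi(G)$ is the CNF on variables $V(G)$ with clauses $(u\vee v)$ for $\{u,v\}\in E(G)$. A decision tree for a Boolean function $F$ (not constant false): root labelled by some variable $x$; for each literal $\ell\in\{x,\neg x\}$ occurring in some satisfying assignment, an outgoing edge labelled $\ell$ whose head is a leaf if only one variable remains and otherwise the root of a decision tree for the restriction $F|_\ell$; a solution counting decision tree additionally has edge weights (the proportion of satisfying assignments consistent with the path extended by the edge's literal). For a node $w$, $A_w$ is the set of literals labelling the root-$w$ path. A variable $y$ is forced to $1$ by $A_w$ if some neighbour $z$ of $y$ in $G$ has $\neg z\in A_w$. $N^w(y)$ is the set of neighbours $z$ of $y$ that do not occur in $A_w$ and are not forced to $1$ by $A_w$. For $d\geq0$, $c_d=1-2^{-(2d+1)}$, and $\alpha^w(S)=\prod_{y\in S}c_{|N^w(y)|}$. *)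

theory Defs
  imports Complex_Main
begin

(* Literals: (x, True) is the literal x, (x, False) is the literal \<not>x. *)
type_synonym 'a lit = "'a \<times> bool"

definition assignments :: "'a set \<Rightarrow> ('a \<Rightarrow> bool) set" where
  "assignments X = {\<sigma>. \<forall>y. y \<notin> X \<longrightarrow> \<sigma> y = False}"

definition sat_set :: "'a set \<Rightarrow> (('a \<Rightarrow> bool) \<Rightarrow> bool) \<Rightarrow> ('a \<Rightarrow> bool) set" where
  "sat_set X F = {\<sigma> \<in> assignments X. F \<sigma>}"

definition restrict_lit :: "(('a \<Rightarrow> bool) \<Rightarrow> bool) \<Rightarrow> 'a lit \<Rightarrow> (('a \<Rightarrow> bool) \<Rightarrow> bool)" where
  "restrict_lit F l = (\<lambda>\<sigma>. F (\<sigma>(fst l := snd l)))"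

(* Weighted decision trees: a node is labelled by a variable and has a list of
   outgoing edges (polarity of the literal, weight, head). DLeaf is a leaf. *)
datatype 'a dtree = DLeaf | DNode 'a "(bool \<times> real \<times> 'a dtree) list"

inductive sc_dtree :: "'a set \<Rightarrow> (('a \<Rightarrow> bool) \<Rightarrow> bool) \<Rightarrow> 'a dtree \<Rightarrow> bool" where
  "\<lbrakk> finite X; x \<in> X; sat_set X F \<noteq> {};
     distinct (map fst es);
     set (map fst es) = {b. \<exists>\<sigma>\<in>sat_set X F. \<sigma> x = b};
     \<forall>(b, w, t') \<in> set es.
        w = real (card {\<sigma> \<in> sat_set X F. \<sigma> x = b}) / real (card (sat_set X F)) \<and>
        (if card X = 1 then t' = DLeaf
         else sc_dtree (X - {x}) (restrict_lit F (x, b)) t') \<rbrakk>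
   \<Longrightarrow> sc_dtree X F (DNode x es)"

(* nodes of a tree, identified with the list of edge literals on the root-node path *)
fun nodes :: "'a dtree \<Rightarrow> 'a lit list set" where
  "nodes DLeaf = {[]}"
| "nodes (DNode x es) = insert [] (\<Union>e \<in> set es. (\<lambda>p. (x, fst e) # p) ` nodes (snd (snd e)))"

definition simple_graph :: "'a set \<Rightarrow> ('a \<Rightarrow> 'a \<Rightarrow> bool) \<Rightarrow> bool" where
  "simple_graph V E \<longleftrightarrow> finite V \<and> (\<forall>u v. E u v \<longrightarrow> u \<in> V \<and> v \<in> V \<and> u \<noteq> v \<and> E v u)"

definition no_isolated :: "'a set \<Rightarrow> ('a \<Rightarrow> 'a \<Rightarrow> bool) \<Rightarrow> bool" where
  "no_isolated V E \<longleftrightarrow> (\<forall>v\<in>V. \<exists>u. E v u)"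

definition phi :: "('a \<Rightarrow> 'a \<Rightarrow> bool) \<Rightarrow> ('a \<Rightarrow> bool) \<Rightarrow> bool" where
  "phi E \<sigma> \<longleftrightarrow> (\<forall>u v. E u v \<longrightarrow> \<sigma> u \<or> \<sigma> v)"

definition occurs :: "'a lit set \<Rightarrow> 'a \<Rightarrow> bool" where
  "occurs A z \<longleftrightarrow> (z, True) \<in> A \<or> (z, False) \<in> A"

definition forced :: "('a \<Rightarrow> 'a \<Rightarrow> bool) \<Rightarrow> 'a lit set \<Rightarrow> 'a \<Rightarrow> bool" where
  "forced E A y \<longleftrightarrow> (\<exists>z. E y z \<and> (z, False) \<in> A)"

definition Nbr :: "('a \<Rightarrow> 'a \<Rightarrow> bool) \<Rightarrow> 'a lit set \<Rightarrow> 'a \<Rightarrow> 'a set" where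
  "Nbr E A y = {z. E y z \<and> \<not> occurs A z \<and> \<not> forced E A z}"

definition cd :: "nat \<Rightarrow> real" where
  "cd d = 1 - 1 / 2 ^ (2 * d + 1)"

definition alpha :: "('a \<Rightarrow> 'a \<Rightarrow> bool) \<Rightarrow> 'a lit set \<Rightarrow> 'a set \<Rightarrow> real" where
  "alpha E A S = (\<Prod>y\<in>S. cd (card (Nbr E A y)))"

end

theory Submission
  imports Defs
begin

text \<open>Extending the path of a node by one literal only adds literals, so the number of unset,
  unforced neighbours of every vertex can only drop, and each factor \<open>c\<^sub>d\<close> is monotone in \<open>d\<close>.\<close>

lemma cd_mono: "d \<le> d' \<Longrightarrow> cd d \<le> cd d'"
proof -
  assume "d \<le> d'"
  then have "(2::real) ^ (2 * d + 1) \<le> 2 ^ (2 * d' + 1)"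
    by (intro power_increasing) auto
  then have "1 / (2::real) ^ (2 * d' + 1) \<le> 1 / 2 ^ (2 * d + 1)"
    by (intro divide_left_mono) auto
  then show ?thesis
    unfolding cd_def by linarith
qed

lemma cd_nonneg: "0 \<le> cd d"
proof -
  have "(1::real) \<le> 2 ^ (2 * d + 1)"
    by (rule one_le_power) simp
  then show ?thesis
    unfolding cd_def by simp
qed

lemma Nbr_antimono: "A \<subseteq> A' \<Longrightarrow> Nbr E A' y \<subseteq> Nbr E A y"
  unfolding Nbr_def occurs_def forced_def by blast

lemma finite_Nbr:
  assumes "simple_graph V E"
  shows "finite (Nbr E A y)"
proof (rule finite_subset)
  show "Nbr E A y \<subseteq> V"
    using assms by (auto simp: Nbr_def simple_graph_def)
  show "finite V"
    using assms by (simp add: simple_graph_def)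
qed

lemma alpha_antimono:
  assumes "simple_graph V E" and "A \<subseteq> A'"
  shows "alpha E A' S \<le> alpha E A S"
proof -
  have "card (Nbr E A' y) \<le> card (Nbr E A y)" for y
    using card_mono[OF finite_Nbr[OF assms(1)] Nbr_antimono[OF assms(2)]] .
  then have "cd (card (Nbr E A' y)) \<le> cd (card (Nbr E A y))" for y
    by (rule cd_mono)
  then show ?thesis
    unfolding alpha_def by (intro prod_mono) (auto simp: cd_nonneg)
qed

theorem lemma12:
  fixes V :: "'a set" and E :: "'a \<Rightarrow> 'a \<Rightarrow> bool" and T :: "'a dtree"
    and u v :: "'a lit list" and S :: "'a set"
  assumes "simple_graph V E"
    and "no_isolated V E"
    and "sc_dtree V (phi E) T"
    and "u \<in> nodes T" and "v \<in> nodes T" and "\<exists>l. v = u @ [l]"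
    and "S \<subseteq> V"
  shows "alpha E (set v) S \<le> alpha E (set u) S"
proof (rule alpha_antimono[OF assms(1)])
  show "set u \<subseteq> set v"
    using assms(6) by auto
qed

end
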